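(* Suppose $\|\mu_a\|_\infty,\|\widehat\mu_a\|_\infty\le B<\infty$ a.s. for all $a$, and $\mathbb{P}\{\epsilon\le\widehat\pi_a(X)\le1-\epsilon\}=1$ for some $\epsilon>0$ and all $a$. Then $$\sup_{C\in\mathcal{C}_k}\big|\mathbb{P}\{\varphi_C(\widehat\eta)-\varphi_C(\eta)\}\big|\lesssim\max_a\|\widehat\mu_a-\mu_a\|_{\mathbb{P},1}+\max_a\|\widehat\mu_a-\mu_a\|\big(\|\widehat\mu_a-\mu_a\|+\|\widehat\pi_a-\pi_a\|\big).$$
   Context: $Z=(Y,A,X)\sim\mathbb{P}$, $A\in\mathcal{A}=\{1,\dots,p\}$. $\mu_a(X)=\mathbb{E}(Y\mid X,A=a)$, $\pi_a(X)=\mathbb{P}(A=a\mid X)$, $\mu=(\mu_1,\dots,\mu_p)^\top$, $\eta=\{\pi_a,\mu_a\}_a$; $\widehat\eta=\{\widehat\pi_a,\widehat\mu_a\}_a$ estimators held fixed under $\mathbb{P}$. $\varphi_{1,a}(Z;\eta)=\frac{\mathbb{1}(A=a)}{\pi_a(X)}\{Y-\mu_A(X)\}+\mu_a(X)$, $\varphi_{2,a}(Z;\eta)=2\mu_a(X)\frac{\mathbb{1}(A=a)}{\pi_a(X)}\{Y-\mu_A(X)\}+\mu_a^2(X)$, $\varphi_C(Z;\eta)=\sum_a\{\varphi_{2,a}(Z;\eta)-2\varphi_{1,a}(Z;\eta)[\Pi_C(\mu)]_a+[\Pi_C(\mu)]_a^2\}$, where at $\widehat\eta$ all of $\mu,\pi$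 (including inside $\Pi_C$) are replaced by $\widehat\mu,\widehat\pi$. Codebooks $C=\{c_1,\dots,c_k\}\subset\mathbb{R}^p$; $\mathcal{C}_k$ those of size $k$ in the image of $\mu$; $\Pi_C(x)=\arg\min_{c\in C}\|c-x\|_2^2$. $\|\cdot\|$ is the $L_2(\mathbb{P})$ norm, $\|f\|_{\mathbb{P},1}=\int|f|d\mathbb{P}$; $\lesssim$ inequality up to a multiplicative constant. *)

theory Defs
  imports "HOL-Probability.Probability"
begin

text \<open>Treatment levels are the elements of a finite type 'p (so p = CARD('p));
vectors in R^p are elements of real^'p.  Covariates live in a measurable space N.\<close>

definition proj_cb :: "(real^'p) set \<Rightarrow> real^'p \<Rightarrow> real^'p" where
  "proj_cb C x = arg_min_on (\<lambda>c. (norm (c - x))\<^sup>2) C"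

text \<open>Influence-function pieces, evaluated at a nuisance pair (m, q) = (mu, pi).\<close>
definition phi1 :: "'p \<Rightarrow> ('w \<Rightarrow> 'p) \<Rightarrow> ('w \<Rightarrow> real) \<Rightarrow> ('w \<Rightarrow> 'x)
    \<Rightarrow> ('x \<Rightarrow> real^'p) \<Rightarrow> ('x \<Rightarrow> real^'p) \<Rightarrow> 'w \<Rightarrow> real" where
  "phi1 a A Y X m q w =
     (if A w = a then 1 else 0) / (q (X w) $ a) * (Y w - m (X w) $ (A w)) + m (X w) $ a"

definition phi2 :: "'p \<Rightarrow> ('w \<Rightarrow> 'p) \<Rightarrow> ('w \<Rightarrow> real) \<Rightarrow> ('w \<Rightarrow> 'x)
    \<Rightarrow> ('x \<Rightarrow> real^'p) \<Rightarrow> ('x \<Rightarrow> real^'p) \<Rightarrow> 'w \<Rightarrow> real" where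
  "phi2 a A Y X m q w =
     2 * m (X w) $ a * ((if A w = a then 1 else 0) / (q (X w) $ a) * (Y w - m (X w) $ (A w)))
     + (m (X w) $ a)\<^sup>2"

definition phiC :: "(real^'p::finite) set \<Rightarrow> ('w \<Rightarrow> 'p) \<Rightarrow> ('w \<Rightarrow> real) \<Rightarrow> ('w \<Rightarrow> 'x)
    \<Rightarrow> ('x \<Rightarrow> real^'p) \<Rightarrow> ('x \<Rightarrow> real^'p) \<Rightarrow> 'w \<Rightarrow> real" where
  "phiC C A Y X m q w =
     (\<Sum>a\<in>UNIV. phi2 a A Y X m q w - 2 * phi1 a A Y X m q w * (proj_cb C (m (X w)) $ a)
                 + (proj_cb C (m (X w)) $ a)\<^sup>2)"

definition codebooks :: "nat \<Rightarrow> ('x \<Rightarrow> real^'p) \<Rightarrow> (real^'p) set set" where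
  "codebooks k m = {C. finite C \<and> card C = k \<and> C \<subseteq> range m}"

text \<open>The data-generating model: (Y, A, X) random variables on the probability space M,
X taking values in N; pi_a(X) = P(A = a | X) and mu_A(X) = E(Y | X, A) almost surely.\<close>
definition obs_model :: "'w measure \<Rightarrow> 'x measure \<Rightarrow> ('w \<Rightarrow> real) \<Rightarrow> ('w \<Rightarrow> 'p::finite)
    \<Rightarrow> ('w \<Rightarrow> 'x) \<Rightarrow> ('x \<Rightarrow> real^'p) \<Rightarrow> ('x \<Rightarrow> real^'p) \<Rightarrow> bool" where
  "obs_model M N Y A X m q \<longleftrightarrow>
     prob_space M \<and>
     Y \<in> borel_measurable M \<and> integrable M Y \<and>
     A \<in> measurable M (count_space UNIV) \<and>
     X \<in> measurable M N \<and>
     m \<in> borel_measurable N \<and> q \<in> borel_measurable N \<and>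
     (\<forall>a. AE w in M. q (X w) $ a =
        real_cond_exp M (vimage_algebra (space M) X N) (indicator {w. A w = a}) w) \<and>
     (AE w in M. m (X w) $ (A w) =
        real_cond_exp M (vimage_algebra (space M) (\<lambda>w. (X w, A w)) (N \<Otimes>\<^sub>M count_space UNIV)) Y w)"

definition L1norm :: "'w measure \<Rightarrow> ('w \<Rightarrow> real) \<Rightarrow> real" where
  "L1norm M f = (\<integral>w. \<bar>f w\<bar> \<partial>M)"

definition L2norm :: "'w measure \<Rightarrow> ('w \<Rightarrow> real) \<Rightarrow> real" where
  "L2norm M f = sqrt (\<integral>w. (f w)\<^sup>2 \<partial>M)"

end

theory Submission
  imports Defs
begin

text \<open>Each influence function is a plug-in term, the squared distance from the regression
vector to its nearest codeword, plus an inverse-propensity weighted residual. Since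
E(Y - mu_A(X) | X, A) = 0 and P(A = a | X) = pi_a(X), the residual terms of
phi_C(eta_hat) - phi_C(eta) integrate away, and what remains is the expectation of a pointwise
second-order remainder: a product term of size (B/eps) |mu_hat_a - mu_a| |pi_hat_a - pi_a|, the
squared error |mu_hat - mu|^2, and the loss from using the codeword nearest mu_hat(X) instead of
the one nearest mu(X) as a codeword for mu(X). Because each codeword is nearest for its own
point, this loss is O(B |mu_hat - mu|_1). Cauchy-Schwarz turns the product term into L2 norms.\<close>

lemma borel_measurable_vec_nth [measurable (raw)]:
  "f \<in> borel_measurable M \<Longrightarrow> (\<lambda>x. (f x :: real^'n) $ i) \<in> borel_measurable M"
  by (rule measurable_compose[OF _ borel_measurable_nth])

lemma power2_norm_vec: "(norm (v :: real^'n))\<^sup>2 = (\<Sum>a\<in>UNIV. (v $ a)\<^sup>2)"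
  unfolding norm_vec_def L2_set_def by (simp add: sum_nonneg)

section \<open>Nearest-codeword projection\<close>

lemma proj_cb_empty: "proj_cb {} x = proj_cb {} y"
  by (simp add: proj_cb_def arg_min_on_def arg_min_def is_arg_min_def)

lemma proj_cb_in:
  assumes "finite C" "C \<noteq> {}"
  shows "proj_cb C x \<in> C"
  unfolding proj_cb_def by (rule arg_min_if_finite(1)[OF assms])

lemma proj_cb_nearest:
  assumes "finite C"
  shows "(norm (x - proj_cb C x))\<^sup>2 \<le> (norm (x - proj_cb C y))\<^sup>2"
proof (cases "C = {}")
  case True
  then show ?thesis using proj_cb_empty[of x y] by simp
next
  case False
  have "(norm (proj_cb C x - x))\<^sup>2 \<le> (norm (proj_cb C y - x))\<^sup>2"
    unfolding proj_cb_def
    by (rule arg_min_least[OF assms False proj_cb_in[OF assms False, unfolded proj_cb_def]])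
  then show ?thesis by (simp add: norm_minus_commute)
qed

text \<open>For the empty codebook (k = 0), proj_cb returns an unspecified but fixed vector,
which therefore enters the bound.\<close>
lemma proj_cb_codebook_bounded:
  fixes m :: "'x \<Rightarrow> real^'p::finite"
  assumes C: "C \<in> codebooks k m" and bound: "\<And>x a. \<bar>m x $ a\<bar> \<le> B"
  shows "\<bar>proj_cb C z $ a\<bar> \<le> max B (norm (proj_cb {} (0::real^'p)))"
proof (cases "C = {}")
  case True
  then show ?thesis using proj_cb_empty[of z 0] component_le_norm_cart[of "proj_cb {} 0" a]
    by (simp add: le_max_iff_disj)
next
  case False
  have "finite C" "C \<subseteq> range m" using C unfolding codebooks_def by auto
  then obtain x where "proj_cb C z = m x" using proj_cb_in[OF _ False, of z] by blast
  then show ?thesis using bound[of x a] by simp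
qed

lemma borel_measurable_proj_cb:
  fixes C :: "(real^'p::finite) set"
  assumes "finite C"
  shows "proj_cb C \<in> borel_measurable borel"
proof -
  define S where "S x = {y\<in>C. \<forall>z\<in>C. (norm (y - x))\<^sup>2 \<le> (norm (z - x))\<^sup>2}" for x :: "real^'p"
  have S: "S \<in> measurable borel (count_space (Pow C))"
  proof (subst measurable_count_space_eq2)
    show "finite (Pow C)" using assms by simp
    have "S -` {T} \<inter> space borel
        = {x. \<forall>y\<in>C. (y \<in> T) = (\<forall>z\<in>C. (norm (y - x))\<^sup>2 \<le> (norm (z - x))\<^sup>2)}"
      if "T \<in> Pow C" for T
      using that unfolding S_def by auto
    moreover have "{x. \<forall>y\<in>C. (y \<in> T) = (\<forall>z\<in>C. (norm (y - x))\<^sup>2 \<le> (norm (z - x))\<^sup>2)}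
        \<in> sets borel" for T
      using assms by measurable
    ultimately show "S \<in> space borel \<rightarrow> Pow C \<and> (\<forall>T\<in>Pow C. S -` {T} \<inter> space borel \<in> sets borel)"
      by (auto simp: S_def)
  qed
  have "proj_cb C = (\<lambda>x. SOME y. y \<in> S x)"
    unfolding proj_cb_def arg_min_on_def arg_min_def is_arg_min_linorder S_def
    by (simp add: Ball_def)
  also have "\<dots> \<in> borel_measurable borel"
    using measurable_compose_countable'[where f="\<lambda>T _. SOME y. y \<in> T", OF _ S] assms
    by (simp add: countable_finite)
  finally show ?thesis .
qed

section \<open>The pointwise second-order remainder\<close>

lemma power2_diff_sub_power2_diff_le:
  fixes u v c b :: real
  assumes "\<bar>u\<bar> \<le> b" "\<bar>v\<bar> \<le> b" "\<bar>c\<bar> \<le> b"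
  shows "(u - c)\<^sup>2 - (v - c)\<^sup>2 \<le> 4 * b * \<bar>u - v\<bar>"
proof -
  have "(u - c)\<^sup>2 - (v - c)\<^sup>2 = (u - v) * (u + v - 2 * c)"
    by (simp add: power2_eq_square algebra_simps)
  also have "\<dots> \<le> \<bar>u - v\<bar> * \<bar>u + v - 2 * c\<bar>" by (metis abs_ge_self abs_mult)
  also have "\<dots> \<le> \<bar>u - v\<bar> * (4 * b)" using assms by (intro mult_left_mono) auto
  finally show ?thesis by (simp add: mult.commute)
qed

lemma abs_divide_le_divide:
  fixes x y c e :: real
  assumes "\<bar>x\<bar> \<le> c" "0 < e" "e \<le> y"
  shows "\<bar>x / y\<bar> \<le> c / e"
proof -
  have "\<bar>x / y\<bar> = \<bar>x\<bar> / y" using assms by (simp add: abs_divide)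
  also have "\<dots> \<le> c / e" using assms by (intro frac_le) auto
  finally show ?thesis .
qed

lemma nearest_codeword_excess_le:
  fixes m mh P Ph :: "real^'p::finite"
  assumes bounded: "\<And>a. \<bar>m $ a\<bar> \<le> b" "\<And>a. \<bar>mh $ a\<bar> \<le> b" "\<And>a. \<bar>P $ a\<bar> \<le> b" "\<And>a. \<bar>Ph $ a\<bar> \<le> b"
    and nearest: "(norm (mh - Ph))\<^sup>2 \<le> (norm (mh - P))\<^sup>2"
  shows "(norm (m - Ph))\<^sup>2 - (norm (m - P))\<^sup>2 \<le> 8 * b * (\<Sum>a\<in>UNIV. \<bar>mh $ a - m $ a\<bar>)"
proof -
  have "(norm (m - Ph))\<^sup>2 - (norm (m - P))\<^sup>2
      \<le> ((norm (m - Ph))\<^sup>2 - (norm (mh - Ph))\<^sup>2) + ((norm (mh - P))\<^sup>2 - (norm (m - P))\<^sup>2)"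
    using nearest by simp
  also have "\<dots> = (\<Sum>a\<in>UNIV. ((m $ a - Ph $ a)\<^sup>2 - (mh $ a - Ph $ a)\<^sup>2)
                              + ((mh $ a - P $ a)\<^sup>2 - (m $ a - P $ a)\<^sup>2))"
    by (simp add: power2_norm_vec sum.distrib sum_subtractf)
  also have "\<dots> \<le> (\<Sum>a\<in>UNIV. 4 * b * \<bar>mh $ a - m $ a\<bar> + 4 * b * \<bar>mh $ a - m $ a\<bar>)"
  proof (intro sum_mono add_mono)
    fix a
    show "(m $ a - Ph $ a)\<^sup>2 - (mh $ a - Ph $ a)\<^sup>2 \<le> 4 * b * \<bar>mh $ a - m $ a\<bar>"
      using power2_diff_sub_power2_diff_le[OF bounded(1,2,4)] by (simp add: abs_minus_commute)
    show "(mh $ a - P $ a)\<^sup>2 - (m $ a - P $ a)\<^sup>2 \<le> 4 * b * \<bar>mh $ a - m $ a\<bar>"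
      using power2_diff_sub_power2_diff_le[OF bounded(2,1,3)] .
  qed
  finally show ?thesis by (simp add: sum_distrib_left mult.assoc)
qed

text \<open>Evaluated at m = mu(X), q = pi(X), mh = mu_hat(X), qh = pi_hat(X), this is the integrand
that P(phi_C(eta_hat) - phi_C(eta)) reduces to once the residual and the treatment indicator are
integrated out.\<close>
definition codebook_remainder ::
    "(real^'p::finite) set \<Rightarrow> real^'p \<Rightarrow> real^'p \<Rightarrow> real^'p \<Rightarrow> real^'p \<Rightarrow> real" where
  "codebook_remainder C m q mh qh =
     (\<Sum>a\<in>UNIV. 2 * (mh $ a - proj_cb C mh $ a) * (m $ a - mh $ a) * q $ a / qh $ a)
     + (norm (mh - proj_cb C mh))\<^sup>2 - (norm (m - proj_cb C m))\<^sup>2"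

lemma codebook_remainder_split:
  fixes m q mh qh :: "real^'p::finite"
  assumes "\<And>a. qh $ a \<noteq> 0"
  shows "codebook_remainder C m q mh qh =
     (\<Sum>a\<in>UNIV. 2 * (mh $ a - proj_cb C mh $ a) * (m $ a - mh $ a) * (q $ a - qh $ a) / qh $ a)
     + ((norm (m - proj_cb C mh))\<^sup>2 - (norm (m - proj_cb C m))\<^sup>2) - (norm (m - mh))\<^sup>2"
proof -
  have "codebook_remainder C m q mh qh =
      (\<Sum>a\<in>UNIV. 2 * (mh $ a - proj_cb C mh $ a) * (m $ a - mh $ a) * q $ a / qh $ a
                   + (mh $ a - proj_cb C mh $ a)\<^sup>2) - (norm (m - proj_cb C m))\<^sup>2"
    unfolding codebook_remainder_def power2_norm_vec[of "mh - _"] by (simp add: sum.distrib)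
  also have "\<dots> =
      (\<Sum>a\<in>UNIV. 2 * (mh $ a - proj_cb C mh $ a) * (m $ a - mh $ a) * (q $ a - qh $ a) / qh $ a
                   + ((m $ a - proj_cb C mh $ a)\<^sup>2 - (m $ a - mh $ a)\<^sup>2))
      - (norm (m - proj_cb C m))\<^sup>2"
    using assms
    by (intro arg_cong2[where f=minus] sum.cong refl) (simp add: field_simps power2_eq_square)
  finally show ?thesis
    by (simp add: power2_norm_vec sum.distrib sum_subtractf)
qed

lemma abs_codebook_remainder_le:
  fixes C :: "(real^'p::finite) set" and m q mh qh :: "real^'p"
  assumes C: "finite C" and e: "0 < e" and qh: "\<And>a. e \<le> qh $ a"
    and bounded: "\<And>a. \<bar>m $ a\<bar> \<le> b" "\<And>a. \<bar>mh $ a\<bar> \<le> b" "\<And>v a. \<bar>proj_cb C v $ a\<bar> \<le> b"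
  shows "\<bar>codebook_remainder C m q mh qh\<bar> \<le> (\<Sum>a\<in>UNIV. 4 * b / e * (\<bar>mh $ a - m $ a\<bar> * \<bar>qh $ a - q $ a\<bar>)
           + 8 * b * \<bar>mh $ a - m $ a\<bar> + (mh $ a - m $ a)\<^sup>2)"
proof -
  define \<alpha> where
    "\<alpha> = (\<Sum>a\<in>UNIV. 2 * (mh $ a - proj_cb C mh $ a) * (m $ a - mh $ a) * (q $ a - qh $ a) / qh $ a)"
  define \<beta> where "\<beta> = (norm (m - proj_cb C mh))\<^sup>2 - (norm (m - proj_cb C m))\<^sup>2"
  have qh_pos: "0 < qh $ a" for a using e qh[of a] by linarith
  have "\<bar>\<alpha>\<bar> \<le> (\<Sum>a\<in>UNIV. \<bar>2 * (mh $ a - proj_cb C mh $ a) * (m $ a - mh $ a) * (q $ a - qh $ a) / qh $ a\<bar>)"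
    unfolding \<alpha>_def by (rule sum_abs)
  also have "\<dots> \<le> (\<Sum>a\<in>UNIV. 4 * b / e * (\<bar>mh $ a - m $ a\<bar> * \<bar>qh $ a - q $ a\<bar>))"
  proof (rule sum_mono)
    fix a
    have "\<bar>mh $ a - proj_cb C mh $ a\<bar> \<le> 2 * b" using bounded(2)[of a] bounded(3)[of mh a] by linarith
    then have "2 * \<bar>mh $ a - proj_cb C mh $ a\<bar> * (\<bar>mh $ a - m $ a\<bar> * \<bar>qh $ a - q $ a\<bar>)
        \<le> 4 * b * (\<bar>mh $ a - m $ a\<bar> * \<bar>qh $ a - q $ a\<bar>)"
      by (intro mult_right_mono) auto
    then have "\<bar>2 * (mh $ a - proj_cb C mh $ a) * (m $ a - mh $ a) * (q $ a - qh $ a)\<bar>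
        \<le> 4 * b * (\<bar>mh $ a - m $ a\<bar> * \<bar>qh $ a - q $ a\<bar>)"
      by (simp only: abs_mult abs_numeral abs_minus_commute[of "m $ a"] abs_minus_commute[of "q $ a"]
          mult.assoc)
    from abs_divide_le_divide[OF this e qh]
    show "\<bar>2 * (mh $ a - proj_cb C mh $ a) * (m $ a - mh $ a) * (q $ a - qh $ a) / qh $ a\<bar>
        \<le> 4 * b / e * (\<bar>mh $ a - m $ a\<bar> * \<bar>qh $ a - q $ a\<bar>)" by simp
  qed
  finally have \<alpha>_le: "\<bar>\<alpha>\<bar> \<le> (\<Sum>a\<in>UNIV. 4 * b / e * (\<bar>mh $ a - m $ a\<bar> * \<bar>qh $ a - q $ a\<bar>))" .
  have \<beta>_ge: "0 \<le> \<beta>"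
    unfolding \<beta>_def using proj_cb_nearest[OF C, of m mh] by simp
  have \<beta>_le: "\<beta> \<le> 8 * b * (\<Sum>a\<in>UNIV. \<bar>mh $ a - m $ a\<bar>)"
    unfolding \<beta>_def using bounded proj_cb_nearest[OF C, of mh m]
    by (intro nearest_codeword_excess_le) auto
  have "codebook_remainder C m q mh qh = \<alpha> + \<beta> - (norm (mh - m))\<^sup>2"
    unfolding \<alpha>_def \<beta>_def norm_minus_commute[of mh m]
    by (intro codebook_remainder_split) (metis qh_pos less_irrefl)
  then have "codebook_remainder C m q mh qh = \<alpha> + \<beta> - (\<Sum>a\<in>UNIV. (mh $ a - m $ a)\<^sup>2)"
    by (simp add: power2_norm_vec)
  moreover have "0 \<le> (\<Sum>a\<in>UNIV. (mh $ a - m $ a)\<^sup>2)" by (simp add: sum_nonneg)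
  moreover have "(\<Sum>a\<in>UNIV. 4 * b / e * (\<bar>mh $ a - m $ a\<bar> * \<bar>qh $ a - q $ a\<bar>)
           + 8 * b * \<bar>mh $ a - m $ a\<bar> + (mh $ a - m $ a)\<^sup>2)
      = (\<Sum>a\<in>UNIV. 4 * b / e * (\<bar>mh $ a - m $ a\<bar> * \<bar>qh $ a - q $ a\<bar>))
        + 8 * b * (\<Sum>a\<in>UNIV. \<bar>mh $ a - m $ a\<bar>) + (\<Sum>a\<in>UNIV. (mh $ a - m $ a)\<^sup>2)"
    by (simp add: sum.distrib sum_distrib_left)
  ultimately show ?thesis
    using \<alpha>_le \<beta>_ge \<beta>_le unfolding abs_le_iff by linarith
qed

lemma phiC_eq_weighted_residual:
  "phiC C A Y X m q w =
     (\<Sum>a\<in>UNIV. 2 * (m (X w) $ a - proj_cb C (m (X w)) $ a) * ((if A w = a then 1 else 0) / q (X w) $ a)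
                * (Y w - m (X w) $ A w))
     + (norm (m (X w) - proj_cb C (m (X w))))\<^sup>2"
  unfolding phiC_def phi1_def phi2_def power2_norm_vec sum.distrib[symmetric]
  by (intro sum.cong refl) (simp add: power2_eq_square algebra_simps)

section \<open>Integration in the observational model\<close>

lemma integral_abs_mult_le_sqrt:
  fixes f g :: "'a \<Rightarrow> real"
  assumes [measurable]: "f \<in> borel_measurable M" "g \<in> borel_measurable M"
    and f2: "integrable M (\<lambda>x. (f x)\<^sup>2)" and g2: "integrable M (\<lambda>x. (g x)\<^sup>2)"
  shows "(\<integral>x. \<bar>f x\<bar> * \<bar>g x\<bar> \<partial>M) \<le> sqrt (\<integral>x. (f x)\<^sup>2 \<partial>M) * sqrt (\<integral>x. (g x)\<^sup>2 \<partial>M)"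
proof -
  define I where "I = (\<integral>\<^sup>+x. ennreal (\<bar>f x\<bar> * \<bar>g x\<bar>) \<partial>M)"
  have "I\<^sup>2 \<le> (\<integral>\<^sup>+x. ennreal \<bar>f x\<bar> ^ 2 \<partial>M) * (\<integral>\<^sup>+x. ennreal \<bar>g x\<bar> ^ 2 \<partial>M)"
    unfolding I_def using Cauchy_Schwarz_nn_integral[of "\<lambda>x. ennreal \<bar>f x\<bar>" M "\<lambda>x. ennreal \<bar>g x\<bar>"]
    by (simp add: ennreal_mult)
  also have "\<dots> = ennreal ((\<integral>x. (f x)\<^sup>2 \<partial>M) * (\<integral>x. (g x)\<^sup>2 \<partial>M))"
    using f2 g2 by (simp add: ennreal_power nn_integral_eq_integral ennreal_mult)
  finally have "enn2real (I\<^sup>2) \<le> (\<integral>x. (f x)\<^sup>2 \<partial>M) * (\<integral>x. (g x)\<^sup>2 \<partial>M)"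
    by (auto dest!: enn2real_mono)
  moreover have "(\<integral>x. \<bar>f x\<bar> * \<bar>g x\<bar> \<partial>M) = enn2real I"
    unfolding I_def by (rule integral_eq_nn_integral) auto
  ultimately have "(\<integral>x. \<bar>f x\<bar> * \<bar>g x\<bar> \<partial>M)\<^sup>2 \<le> (sqrt (\<integral>x. (f x)\<^sup>2 \<partial>M) * sqrt (\<integral>x. (g x)\<^sup>2 \<partial>M))\<^sup>2"
    by (simp add: power2_eq_square enn2real_mult real_sqrt_mult[symmetric] integral_nonneg_AE)
  then show ?thesis by (rule power2_le_imp_le) simp
qed

lemma (in prob_space) integral_second_order_terms_le:
  fixes d D :: "'a \<Rightarrow> real"
  assumes [measurable]: "d \<in> borel_measurable M" "D \<in> borel_measurable M"
    and d: "\<And>w. \<bar>d w\<bar> \<le> c" and D: "AE w in M. \<bar>D w\<bar> \<le> 1" and c1: "0 \<le> c1" and c2: "0 \<le> c2"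
  shows "integrable M (\<lambda>w. c1 * (\<bar>d w\<bar> * \<bar>D w\<bar>) + c2 * \<bar>d w\<bar> + (d w)\<^sup>2)"
    and "(\<integral>w. c1 * (\<bar>d w\<bar> * \<bar>D w\<bar>) + c2 * \<bar>d w\<bar> + (d w)\<^sup>2 \<partial>M)
         \<le> c1 * (L2norm M d * L2norm M D) + c2 * L1norm M d + (L2norm M d)\<^sup>2"
proof -
  have d_int: "integrable M d"
    using d by (intro integrable_const_bound[where B=c]) auto
  have d2_int: "integrable M (\<lambda>w. (d w)\<^sup>2)"
    using power_mono[OF d abs_ge_zero, of _ 2] by (intro integrable_const_bound[where B="c\<^sup>2"]) auto
  have D2_int: "integrable M (\<lambda>w. (D w)\<^sup>2)"
    using D
    by (intro integrable_const_bound[where B=1]) (auto simp: abs_square_le_1 elim: eventually_mono)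
  have dD_int: "integrable M (\<lambda>w. \<bar>d w\<bar> * \<bar>D w\<bar>)"
  proof (rule integrable_const_bound[where B=c])
    show "AE w in M. norm (\<bar>d w\<bar> * \<bar>D w\<bar>) \<le> c"
      using D
    proof eventually_elim
      case (elim w)
      then have "\<bar>d w\<bar> * \<bar>D w\<bar> \<le> c * 1" using d order_trans[OF abs_ge_zero d] by (intro mult_mono) auto
      then show ?case by simp
    qed
  qed simp
  show "integrable M (\<lambda>w. c1 * (\<bar>d w\<bar> * \<bar>D w\<bar>) + c2 * \<bar>d w\<bar> + (d w)\<^sup>2)"
    using dD_int d_int d2_int by auto
  have "(\<integral>w. c1 * (\<bar>d w\<bar> * \<bar>D w\<bar>) + c2 * \<bar>d w\<bar> + (d w)\<^sup>2 \<partial>M)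
      = c1 * (\<integral>w. \<bar>d w\<bar> * \<bar>D w\<bar> \<partial>M) + c2 * L1norm M d + (\<integral>w. (d w)\<^sup>2 \<partial>M)"
    using dD_int d_int d2_int by (simp add: L1norm_def)
  also have "\<dots> \<le> c1 * (L2norm M d * L2norm M D) + c2 * L1norm M d + (L2norm M d)\<^sup>2"
  proof (intro add_mono mult_left_mono order_refl c1 c2)
    show "(\<integral>w. \<bar>d w\<bar> * \<bar>D w\<bar> \<partial>M) \<le> L2norm M d * L2norm M D"
      unfolding L2norm_def using d2_int D2_int by (rule integral_abs_mult_le_sqrt[rotated 2]) measurable
    show "(\<integral>w. (d w)\<^sup>2 \<partial>M) \<le> (L2norm M d)\<^sup>2"
      unfolding L2norm_def by (simp add: integral_nonneg_AE)
  qed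
  finally show "(\<integral>w. c1 * (\<bar>d w\<bar> * \<bar>D w\<bar>) + c2 * \<bar>d w\<bar> + (d w)\<^sup>2 \<partial>M)
      \<le> c1 * (L2norm M d * L2norm M D) + c2 * L1norm M d + (L2norm M d)\<^sup>2" .
qed

lemma integrable_bounded_mult:
  fixes f g :: "'a \<Rightarrow> real"
  assumes g: "integrable M g" and f: "f \<in> borel_measurable M" and bounded: "AE x in M. \<bar>f x\<bar> \<le> c"
  shows "integrable M (\<lambda>x. f x * g x)"
proof (rule Bochner_Integration.integrable_bound[OF integrable_mult_right[OF g, of c]])
  show "(\<lambda>x. f x * g x) \<in> borel_measurable M" using f borel_measurable_integrable[OF g] by simp
  show "AE x in M. norm (f x * g x) \<le> norm (c * g x)"
    using bounded by eventually_elim (auto simp: abs_mult intro: mult_right_mono)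
qed

lemma sigma_finite_subalgebra_vimage_algebra:
  assumes "prob_space M" "T \<in> measurable M N"
  shows "sigma_finite_subalgebra M (vimage_algebra (space M) T N)"
proof -
  interpret prob_space M by fact
  have "finite_measure_subalgebra M (vimage_algebra (space M) T N)"
    unfolding finite_measure_subalgebra_def finite_measure_subalgebra_axioms_def subalgebra_def
    using sets_image_in_sets[OF refl assms(2)] finite_measure_axioms by simp
  then show ?thesis by (rule finite_measure_subalgebra_is_sigma_finite)
qed

lemma (in sigma_finite_subalgebra) integral_mult_real_cond_exp_eq:
  assumes f: "f \<in> borel_measurable F" and g: "g \<in> borel_measurable M" and h: "h \<in> borel_measurable M"
    and fg: "integrable M (\<lambda>x. f x * g x)" and ce: "AE x in M. real_cond_exp M F g x = h x"
  shows "(\<integral>x. f x * g x \<partial>M) = (\<integral>x. f x * h x \<partial>M)"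
proof -
  have "(\<integral>x. f x * g x \<partial>M) = (\<integral>x. f x * real_cond_exp M F g x \<partial>M)"
    using real_cond_exp_intg(2)[OF fg f g] by simp
  also have "\<dots> = (\<integral>x. f x * h x \<partial>M)"
    using measurable_from_subalg[OF subalg f] h ce by (intro integral_cong_AE) auto
  finally show ?thesis .
qed

lemma obs_model_propensity_bounds:
  assumes "obs_model M N Y A X m q"
  shows "AE w in M. 0 \<le> q (X w) $ a \<and> q (X w) $ a \<le> 1"
proof -
  let ?F = "vimage_algebra (space M) X N"
  have ps: "prob_space M" and [measurable]: "A \<in> measurable M (count_space UNIV)" "X \<in> measurable M N"
    and q: "AE w in M. q (X w) $ a = real_cond_exp M ?F (indicator {w. A w = a}) w"
    using assms unfolding obs_model_def by blast+
  interpret sigma_finite_subalgebra M ?F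
    by (rule sigma_finite_subalgebra_vimage_algebra) fact+
  interpret prob_space M by fact
  have "integrable M (indicator {w. A w = a} :: _ \<Rightarrow> real)"
    by (rule integrable_const_bound[where B=1]) (auto simp: indicator_def)
  then have "AE w in M. real_cond_exp M ?F (indicator {w. A w = a}) w \<le> 1"
    by (rule real_cond_exp_le_c) (auto simp: indicator_def)
  moreover have "AE w in M. 0 \<le> real_cond_exp M ?F (indicator {w. A w = a}) w"
    by (rule real_cond_exp_pos) auto
  ultimately show ?thesis using q by eventually_elim simp
qed

lemma obs_model_residual_orthogonal:
  assumes obs: "obs_model M N Y A X m q"
    and h: "h \<in> borel_measurable (N \<Otimes>\<^sub>M count_space UNIV)"
    and m_int: "integrable M (\<lambda>w. m (X w) $ A w)"
    and hZ_int: "integrable M (\<lambda>w. h (X w, A w) * (Y w - m (X w) $ A w))"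
  shows "(\<integral>w. h (X w, A w) * (Y w - m (X w) $ A w) \<partial>M) = 0"
proof -
  let ?F = "vimage_algebra (space M) (\<lambda>w. (X w, A w)) (N \<Otimes>\<^sub>M count_space UNIV)"
  have ps: "prob_space M" and [measurable]: "Y \<in> borel_measurable M" "A \<in> measurable M (count_space UNIV)"
      "X \<in> measurable M N" "m \<in> borel_measurable N"
    and Y_int: "integrable M Y"
    and m_ce: "AE w in M. m (X w) $ (A w) = real_cond_exp M ?F Y w"
    using obs unfolding obs_model_def by blast+
  have XA: "(\<lambda>w. (X w, A w)) \<in> measurable M (N \<Otimes>\<^sub>M count_space UNIV)" by measurable
  interpret sigma_finite_subalgebra M ?F
    by (rule sigma_finite_subalgebra_vimage_algebra[OF ps XA])
  have XA_F: "(\<lambda>w. (X w, A w)) \<in> measurable ?F (N \<Otimes>\<^sub>M count_space UNIV)"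
    by (rule measurable_vimage_algebra1) (use measurable_space[OF XA] in auto)
  have m_eval: "(\<lambda>(x, c). m x $ c) \<in> borel_measurable (N \<Otimes>\<^sub>M count_space UNIV)"
    by measurable
  have mA_F: "(\<lambda>w. m (X w) $ A w) \<in> borel_measurable ?F"
    using measurable_compose[OF XA_F m_eval] by simp
  have "AE w in M. real_cond_exp M ?F (\<lambda>w. Y w - m (X w) $ A w) w = 0"
    using real_cond_exp_diff[OF Y_int m_int] real_cond_exp_F_meas[OF m_int mA_F] m_ce
    by eventually_elim simp
  moreover have "(\<lambda>w. h (X w, A w)) \<in> borel_measurable ?F"
    using measurable_compose[OF XA_F h] .
  ultimately show ?thesis
    using integral_mult_real_cond_exp_eq[of "\<lambda>w. h (X w, A w)" "\<lambda>w. Y w - m (X w) $ A w" "\<lambda>_. 0"]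
      measurable_compose[OF XA m_eval] hZ_int
    by simp
qed

lemma obs_model_treatment_indicator:
  assumes obs: "obs_model M N Y A X m q"
    and h: "h \<in> borel_measurable N"
    and hI_int: "integrable M (\<lambda>w. h (X w) * (if A w = a then 1 else 0))"
  shows "(\<integral>w. h (X w) * (if A w = a then 1 else 0) \<partial>M) = (\<integral>w. h (X w) * q (X w) $ a \<partial>M)"
proof -
  let ?F = "vimage_algebra (space M) X N"
  have ps: "prob_space M" and [measurable]: "A \<in> measurable M (count_space UNIV)"
      "X \<in> measurable M N" "q \<in> borel_measurable N"
    and q_ce: "AE w in M. q (X w) $ a = real_cond_exp M ?F (indicator {w. A w = a}) w"
    using obs unfolding obs_model_def by blast+
  interpret sigma_finite_subalgebra M ?F
    by (rule sigma_finite_subalgebra_vimage_algebra) fact+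
  have X_F: "X \<in> measurable ?F N"
    by (rule measurable_vimage_algebra1) (use measurable_space[of X M N] in auto)
  have indicator_eq: "indicator {w. A w = a} w = (if A w = a then 1 else 0 :: real)" for w
    by (simp add: indicator_def)
  have "(\<integral>w. h (X w) * indicator {w. A w = a} w \<partial>M) = (\<integral>w. h (X w) * q (X w) $ a \<partial>M)"
  proof (rule integral_mult_real_cond_exp_eq)
    show "(\<lambda>w. h (X w)) \<in> borel_measurable ?F" using measurable_compose[OF X_F h] .
    show "indicator {w. A w = a} \<in> borel_measurable M" "(\<lambda>w. q (X w) $ a) \<in> borel_measurable M"
      by measurable
    show "integrable M (\<lambda>w. h (X w) * indicator {w. A w = a} w)"
      using hI_int by (simp add: indicator_eq)
    show "AE w in M. real_cond_exp M ?F (indicator {w. A w = a}) w = q (X w) $ a"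
      using q_ce by (auto elim: eventually_mono)
  qed
  then show ?thesis by (simp add: indicator_eq)
qed

lemma obs_model_integrable_mu_A:
  assumes obs: "obs_model M N Y A X mu q" and bounded: "\<And>x a. \<bar>mu x $ a\<bar> \<le> b"
  shows "integrable M (\<lambda>w. mu (X w) $ A w)"
proof -
  have ps: "prob_space M" and [measurable]: "A \<in> measurable M (count_space UNIV)"
      "X \<in> measurable M N" "mu \<in> borel_measurable N"
    using obs unfolding obs_model_def by blast+
  interpret prob_space M by (rule ps)
  show ?thesis
    using bounded by (intro integrable_const_bound[where B=b]) (auto simp: measurable_compose_countable)
qed

lemma obs_model_integrable_weighted_residual:
  fixes mu pi q :: "'x \<Rightarrow> real^'p::finite" and f f' :: "'x \<Rightarrow> real"
  assumes obs: "obs_model M N Y A X mu pi" and mu_A_int: "integrable M (\<lambda>w. mu (X w) $ A w)"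
    and [measurable]: "f \<in> borel_measurable N" "f' \<in> borel_measurable N" "q \<in> borel_measurable N"
    and f_bound: "\<And>x. \<bar>f x\<bar> \<le> c" "\<And>x. \<bar>f' x\<bar> \<le> c"
    and e: "0 < e" and q: "AE w in M. e \<le> q (X w) $ a"
    and ipw_int: "integrable M (\<lambda>w. (if A w = a then 1 else 0) / pi (X w) $ a * (Y w - mu (X w) $ a))"
  shows "integrable M (\<lambda>w. (f (X w) / q (X w) $ a - f' (X w) / pi (X w) $ a) * (if A w = a then 1 else 0)
                            * (Y w - mu (X w) $ A w))"
proof -
  have [measurable]: "A \<in> measurable M (count_space UNIV)" "X \<in> measurable M N" "pi \<in> borel_measurable N"
    and Y_int: "integrable M Y"
    using obs unfolding obs_model_def by blast+
  have "AE w in M. \<bar>if A w = a then f (X w) / q (X w) $ a else 0\<bar> \<le> c / e"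
    using q
  proof eventually_elim
    case (elim w)
    have "\<bar>f (X w) / q (X w) $ a\<bar> \<le> c / e" using f_bound(1) e elim by (rule abs_divide_le_divide)
    then show ?case using order_trans[OF abs_ge_zero f_bound(1)] e by auto
  qed
  then have "integrable M (\<lambda>w. (if A w = a then f (X w) / q (X w) $ a else 0) * (Y w - mu (X w) $ A w))"
    by (rule integrable_bounded_mult[OF Bochner_Integration.integrable_diff[OF Y_int mu_A_int], rotated])
      measurable
  moreover have "integrable M (\<lambda>w. f' (X w)
      * ((if A w = a then 1 else 0) / pi (X w) $ a * (Y w - mu (X w) $ a)))"
    using f_bound(2) by (intro integrable_bounded_mult[OF ipw_int, of _ c]) auto
  ultimately have "integrable M (\<lambda>w.
      (if A w = a then f (X w) / q (X w) $ a else 0) * (Y w - mu (X w) $ A w)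
      - f' (X w) * ((if A w = a then 1 else 0) / pi (X w) $ a * (Y w - mu (X w) $ a)))"
    by (rule Bochner_Integration.integrable_diff)
  then show ?thesis
    by (rule back_subst[where P="integrable M"]) (auto simp: algebra_simps diff_divide_distrib)
qed

lemma obs_model_integral_decomposition:
  fixes mu pi :: "'x \<Rightarrow> real^'p::finite"
    and g :: "'p \<Rightarrow> 'x \<times> 'p \<Rightarrow> real" and h k :: "'p \<Rightarrow> 'x \<Rightarrow> real"
  assumes obs: "obs_model M N Y A X mu pi"
    and mu_A_int: "integrable M (\<lambda>w. mu (X w) $ A w)"
    and [measurable]: "\<And>a. g a \<in> borel_measurable (N \<Otimes>\<^sub>M count_space UNIV)"
      "\<And>a. h a \<in> borel_measurable N" "\<And>a. k a \<in> borel_measurable N"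
    and gZ_int: "\<And>a. integrable M (\<lambda>w. g a (X w, A w) * (Y w - mu (X w) $ A w))"
    and h_bound: "\<And>a. AE w in M. \<bar>h a (X w)\<bar> \<le> c" and k_bound: "\<And>a x. \<bar>k a x\<bar> \<le> c'"
  shows "(\<integral>w. (\<Sum>a\<in>UNIV. g a (X w, A w) * (Y w - mu (X w) $ A w)
                         + h a (X w) * (if A w = a then 1 else 0) + k a (X w)) \<partial>M)
       = (\<integral>w. (\<Sum>a\<in>UNIV. h a (X w) * pi (X w) $ a + k a (X w)) \<partial>M)"
proof -
  have ps: "prob_space M" and [measurable]: "A \<in> measurable M (count_space UNIV)"
      "X \<in> measurable M N" "pi \<in> borel_measurable N"
    using obs unfolding obs_model_def by blast+
  interpret prob_space M by (rule ps)
  have hI_int: "integrable M (\<lambda>w. h a (X w) * (if A w = a then 1 else 0))" for a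
  proof (rule integrable_const_bound[where B=c])
    show "AE w in M. norm (h a (X w) * (if A w = a then 1 else 0)) \<le> c"
      using h_bound[of a] by eventually_elim (auto intro: order_trans[OF abs_ge_zero])
  qed simp
  have hpi_int: "integrable M (\<lambda>w. h a (X w) * pi (X w) $ a)" for a
  proof (rule integrable_const_bound[where B=c])
    show "AE w in M. norm (h a (X w) * pi (X w) $ a) \<le> c"
      using h_bound[of a] obs_model_propensity_bounds[OF obs, of a]
    proof eventually_elim
      case (elim w)
      then have "\<bar>h a (X w)\<bar> * \<bar>pi (X w) $ a\<bar> \<le> c * 1" by (intro mult_mono) auto
      then show ?case by (simp add: abs_mult)
    qed
  qed simp
  have k_int: "integrable M (\<lambda>w. k a (X w))" for a
    using k_bound by (intro integrable_const_bound[where B=c']) auto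
  have "(\<integral>w. g a (X w, A w) * (Y w - mu (X w) $ A w) + h a (X w) * (if A w = a then 1 else 0) + k a (X w) \<partial>M)
      = (\<integral>w. h a (X w) * pi (X w) $ a + k a (X w) \<partial>M)" for a
    using obs_model_residual_orthogonal[OF obs _ mu_A_int gZ_int[of a]]
      obs_model_treatment_indicator[OF obs _ hI_int[of a]]
      gZ_int[of a] hI_int[of a] hpi_int[of a] k_int[of a]
    by simp
  then show ?thesis
    using gZ_int hI_int hpi_int k_int by (simp add: Bochner_Integration.integral_sum)
qed

lemma integral_phiC_diff_eq_remainder:
  fixes mu pi muh pih :: "'x \<Rightarrow> real^'p::finite"
  assumes obs: "obs_model M N Y A X mu pi"
    and [measurable]: "muh \<in> borel_measurable N" "pih \<in> borel_measurable N"
    and C: "finite C"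
    and bounded: "\<And>x a. \<bar>mu x $ a\<bar> \<le> b" "\<And>x a. \<bar>muh x $ a\<bar> \<le> b" "\<And>v a. \<bar>proj_cb C v $ a\<bar> \<le> b"
    and e: "0 < e" and pih: "\<And>a. AE w in M. e \<le> pih (X w) $ a"
    and ipw_int: "\<And>a. integrable M (\<lambda>w. (if A w = a then 1 else 0) / pi (X w) $ a * (Y w - mu (X w) $ a))"
  shows "(\<integral>w. phiC C A Y X muh pih w - phiC C A Y X mu pi w \<partial>M)
       = (\<integral>w. codebook_remainder C (mu (X w)) (pi (X w)) (muh (X w)) (pih (X w)) \<partial>M)"
proof -
  have [measurable]: "mu \<in> borel_measurable N" "pi \<in> borel_measurable N"
    using obs unfolding obs_model_def by blast+
  note borel_measurable_proj_cb[OF C, measurable]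
  have b: "0 \<le> b" using bounded(1)[of undefined undefined] by linarith
  define dh where "dh a x = muh x $ a - proj_cb C (muh x) $ a" for a x
  define d where "d a x = mu x $ a - proj_cb C (mu x) $ a" for a x
  define g where
    "g a = (\<lambda>(x, c). (2 * dh a x / pih x $ a - 2 * d a x / pi x $ a) * (if c = a then 1 else 0))" for a
  define h where "h a x = 2 * dh a x * (mu x $ a - muh x $ a) / pih x $ a" for a x
  define k where "k a x = (dh a x)\<^sup>2 - (d a x)\<^sup>2" for a x
  have dh_bound: "\<bar>dh a x\<bar> \<le> 2 * b" and d_bound: "\<bar>d a x\<bar> \<le> 2 * b"
    and diff_bound: "\<bar>mu x $ a - muh x $ a\<bar> \<le> 2 * b" for a x
    unfolding dh_def d_def using bounded(1,2)[of x a] bounded(3)[of "muh x" a] bounded(3)[of "mu x" a]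
    by linarith+
  have mu_A_int: "integrable M (\<lambda>w. mu (X w) $ A w)"
    by (rule obs_model_integrable_mu_A[OF obs bounded(1)])
  txt \<open>On A = a, the hat residual splits as Y - muh_a = (Y - mu_A) + (mu_a - muh_a).\<close>
  have phiC_diff: "phiC C A Y X muh pih w - phiC C A Y X mu pi w
      = (\<Sum>a\<in>UNIV. g a (X w, A w) * (Y w - mu (X w) $ A w)
                   + h a (X w) * (if A w = a then 1 else 0) + k a (X w))" for w
    unfolding phiC_eq_weighted_residual power2_norm_vec sum_subtractf[symmetric] sum.distrib[symmetric]
    by (intro sum.cong refl)
       (auto simp: g_def h_def k_def dh_def d_def algebra_simps diff_divide_distrib add_divide_distrib)
  have "(\<integral>w. phiC C A Y X muh pih w - phiC C A Y X mu pi w \<partial>M)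
      = (\<integral>w. (\<Sum>a\<in>UNIV. h a (X w) * pi (X w) $ a + k a (X w)) \<partial>M)"
    unfolding phiC_diff
  proof (rule obs_model_integral_decomposition[OF obs mu_A_int])
    show "g a \<in> borel_measurable (N \<Otimes>\<^sub>M count_space UNIV)" "h a \<in> borel_measurable N"
      "k a \<in> borel_measurable N" for a
      unfolding g_def h_def k_def dh_def d_def by measurable
    show "integrable M (\<lambda>w. g a (X w, A w) * (Y w - mu (X w) $ A w))" for a
      using obs_model_integrable_weighted_residual[OF obs mu_A_int _ _ _ _ _ e pih ipw_int,
          where f="\<lambda>x. 2 * dh a x" and f'="\<lambda>x. 2 * d a x" and c="4 * b"]
        dh_bound d_bound
      by (simp add: g_def abs_mult) (unfold dh_def d_def, measurable)
    show "AE w in M. \<bar>h a (X w)\<bar> \<le> 8 * b\<^sup>2 / e" for a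
      using pih[of a]
    proof eventually_elim
      case (elim w)
      have "\<bar>2 * dh a (X w) * (mu (X w) $ a - muh (X w) $ a)\<bar> \<le> 2 * (2 * b) * (2 * b)"
        unfolding abs_mult using dh_bound diff_bound b by (intro mult_mono) auto
      then show ?case
        unfolding h_def using abs_divide_le_divide e elim b by (simp add: power2_eq_square)
    qed
    show "\<bar>k a x\<bar> \<le> (2 * b)\<^sup>2" for a x
      using power_mono[OF dh_bound abs_ge_zero, of a x 2] power_mono[OF d_bound abs_ge_zero, of a x 2]
        zero_le_power2[of "dh a x"] zero_le_power2[of "d a x"]
      unfolding k_def abs_le_iff power2_abs by (intro conjI; linarith)
  qed
  also have "\<dots> = (\<integral>w. codebook_remainder C (mu (X w)) (pi (X w)) (muh (X w)) (pih (X w)) \<partial>M)"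
    unfolding codebook_remainder_def power2_norm_vec sum_subtractf[symmetric] sum.distrib[symmetric]
    by (intro Bochner_Integration.integral_cong sum.cong refl)
      (simp add: h_def k_def dh_def d_def algebra_simps)
  finally show ?thesis .
qed

section \<open>Bounding the remainder\<close>

lemma abs_integral_phiC_diff_le:
  fixes mu pi muh pih :: "'x \<Rightarrow> real^'p::finite"
  assumes obs: "obs_model M N Y A X mu pi"
    and [measurable]: "muh \<in> borel_measurable N" "pih \<in> borel_measurable N"
    and C: "finite C"
    and bounded: "\<And>x a. \<bar>mu x $ a\<bar> \<le> b" "\<And>x a. \<bar>muh x $ a\<bar> \<le> b" "\<And>v a. \<bar>proj_cb C v $ a\<bar> \<le> b"
    and e: "0 < e" and pih: "\<And>a. AE w in M. e \<le> pih (X w) $ a \<and> pih (X w) $ a \<le> 1 - e"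
    and ipw_int: "\<And>a. integrable M (\<lambda>w. (if A w = a then 1 else 0) / pi (X w) $ a * (Y w - mu (X w) $ a))"
  shows "\<bar>\<integral>w. phiC C A Y X muh pih w - phiC C A Y X mu pi w \<partial>M\<bar>
    \<le> (\<Sum>a\<in>UNIV. 4 * b / e * (L2norm M (\<lambda>w. muh (X w) $ a - mu (X w) $ a)
                                   * L2norm M (\<lambda>w. pih (X w) $ a - pi (X w) $ a))
                 + 8 * b * L1norm M (\<lambda>w. muh (X w) $ a - mu (X w) $ a)
                 + (L2norm M (\<lambda>w. muh (X w) $ a - mu (X w) $ a))\<^sup>2)"
proof -
  have ps: "prob_space M"
    and [measurable]: "X \<in> measurable M N" "mu \<in> borel_measurable N" "pi \<in> borel_measurable N"
    using obs unfolding obs_model_def by blast+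
  interpret prob_space M by (rule ps)
  define d where "d a w = muh (X w) $ a - mu (X w) $ a" for a w
  define D where "D a w = pih (X w) $ a - pi (X w) $ a" for a w
  define T where "T a w = 4 * b / e * (\<bar>d a w\<bar> * \<bar>D a w\<bar>) + 8 * b * \<bar>d a w\<bar> + (d a w)\<^sup>2" for a w
  define R where
    "R a = 4 * b / e * (L2norm M (d a) * L2norm M (D a)) + 8 * b * L1norm M (d a) + (L2norm M (d a))\<^sup>2" for a
  have b: "0 \<le> b" using bounded(1)[of undefined undefined] by linarith
  have terms: "integrable M (T a)" "integral\<^sup>L M (T a) \<le> R a" for a
  proof -
    have "d a \<in> borel_measurable M" "D a \<in> borel_measurable M" unfolding d_def D_def by measurable
    moreover have "\<bar>d a w\<bar> \<le> 2 * b" for w unfolding d_def using bounded(1,2)[of "X w" a] by linarith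
    moreover have "AE w in M. \<bar>D a w\<bar> \<le> 1"
      using pih[of a] obs_model_propensity_bounds[OF obs, of a] unfolding D_def
      by eventually_elim (use e in linarith)
    moreover have "0 \<le> 4 * b / e" "0 \<le> 8 * b" using b e by simp_all
    ultimately show "integrable M (T a)" "integral\<^sup>L M (T a) \<le> R a"
      unfolding T_def R_def by (rule integral_second_order_terms_le)+
  qed
  have "\<bar>\<integral>w. phiC C A Y X muh pih w - phiC C A Y X mu pi w \<partial>M\<bar>
      = \<bar>\<integral>w. codebook_remainder C (mu (X w)) (pi (X w)) (muh (X w)) (pih (X w)) \<partial>M\<bar>"
    using integral_phiC_diff_eq_remainder[OF obs _ _ C bounded e _ ipw_int] pih
    by (simp add: eventually_mono)
  also have "\<dots> \<le> (\<integral>w. \<bar>codebook_remainder C (mu (X w)) (pi (X w)) (muh (X w)) (pih (X w))\<bar> \<partial>M)"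
    by (rule integral_abs_bound)
  also have "\<dots> \<le> (\<integral>w. (\<Sum>a\<in>UNIV. T a w) \<partial>M)"
  proof (rule integral_mono_AE')
    show "integrable M (\<lambda>w. \<Sum>a\<in>UNIV. T a w)"
      using terms(1) by (intro Bochner_Integration.integrable_sum)
    have "AE w in M. \<forall>a. e \<le> pih (X w) $ a \<and> pih (X w) $ a \<le> 1 - e"
      using pih by (simp add: AE_all_countable)
    then show "AE w in M. \<bar>codebook_remainder C (mu (X w)) (pi (X w)) (muh (X w)) (pih (X w))\<bar>
        \<le> (\<Sum>a\<in>UNIV. T a w)"
    proof eventually_elim
      case (elim w)
      show ?case
        unfolding T_def d_def D_def
        by (rule abs_codebook_remainder_le[OF C e]) (use elim bounded in auto)
    qed
    show "AE w in M. 0 \<le> (\<Sum>a\<in>UNIV. T a w)"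
      unfolding T_def using b e by (intro AE_I2 sum_nonneg add_nonneg_nonneg mult_nonneg_nonneg) auto
  qed
  also have "\<dots> = (\<Sum>a\<in>UNIV. integral\<^sup>L M (T a))"
    using terms(1) by (rule Bochner_Integration.integral_sum)
  also have "\<dots> \<le> (\<Sum>a\<in>UNIV. R a)"
    using terms(2) by (rule sum_mono)
  finally show ?thesis unfolding R_def d_def D_def .
qed

lemma sum_le_card_mult_max:
  fixes L1 L2 L3 :: "'p::finite \<Rightarrow> real" and c1 c2 :: real
  assumes c: "0 \<le> c1" "0 \<le> c2" and L: "\<And>a. 0 \<le> L1 a" "\<And>a. 0 \<le> L2 a" "\<And>a. 0 \<le> L3 a"
  shows "(\<Sum>a\<in>UNIV. c1 * (L2 a * L3 a) + c2 * L1 a + (L2 a)\<^sup>2)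
     \<le> real CARD('p) * (c1 + 1 + c2) * ((MAX a\<in>UNIV. L1 a) + (MAX a\<in>UNIV. L2 a * (L2 a + L3 a)))"
proof -
  define M1 where "M1 = (MAX a\<in>UNIV. L1 a)"
  define M2 where "M2 = (MAX a\<in>UNIV. L2 a * (L2 a + L3 a))"
  have M1: "L1 a \<le> M1" and M2: "L2 a * (L2 a + L3 a) \<le> M2" for a
    unfolding M1_def M2_def by (auto intro: Max_ge)
  have M1_nonneg: "0 \<le> M1" using M1[of undefined] L(1)[of undefined] by linarith
  have M2_nonneg: "0 \<le> M2"
    using M2[of undefined] L(2,3)[of undefined]
    by (meson add_nonneg_nonneg mult_nonneg_nonneg order_trans)
  have "c1 * (L2 a * L3 a) + c2 * L1 a + (L2 a)\<^sup>2 \<le> (c1 + 1 + c2) * (M1 + M2)" for a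
  proof -
    have "c1 * (L2 a * L3 a) + c2 * L1 a + (L2 a)\<^sup>2 \<le> (c1 + 1) * (L2 a * (L2 a + L3 a)) + c2 * L1 a"
      using c L[of a] by (simp add: algebra_simps power2_eq_square)
    also have "\<dots> \<le> (c1 + 1) * M2 + c2 * M1"
      using c M1[of a] M2[of a] by (intro add_mono mult_left_mono) auto
    also have "\<dots> \<le> (c1 + 1 + c2) * (M1 + M2)"
      using c M1_nonneg M2_nonneg by (simp add: algebra_simps)
    finally show ?thesis .
  qed
  then have "(\<Sum>a\<in>UNIV. c1 * (L2 a * L3 a) + c2 * L1 a + (L2 a)\<^sup>2)
      \<le> real CARD('p) * ((c1 + 1 + c2) * (M1 + M2))"
    by (rule sum_bounded_above)
  then show ?thesis unfolding M1_def M2_def by (simp add: mult.assoc)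
qed

theorem lemmaA8:
  fixes B \<epsilon> :: real and k :: nat
  assumes "0 < \<epsilon>"
  shows "\<exists>K::real. \<forall>(M::'w measure) (N::'x measure) Y (A::'w \<Rightarrow> 'p::finite) X
            (mu::'x \<Rightarrow> real^'p) pi muh pih.
     obs_model M N Y A X mu pi
     \<and> muh \<in> borel_measurable N \<and> pih \<in> borel_measurable N
     \<and> (\<forall>a x. \<bar>mu x $ a\<bar> \<le> B \<and> \<bar>muh x $ a\<bar> \<le> B)
     \<and> (\<forall>a. AE w in M. \<epsilon> \<le> pih (X w) $ a \<and> pih (X w) $ a \<le> 1 - \<epsilon>)
     \<and> (\<forall>a. integrable M (\<lambda>w. (if A w = a then 1 else 0) / (pi (X w) $ a)
                                    * (Y w - mu (X w) $ a)))
     \<longrightarrow> (\<forall>C \<in> codebooks k mu.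
           \<bar>\<integral>w. phiC C A Y X muh pih w - phiC C A Y X mu pi w \<partial>M\<bar>
           \<le> K * ((MAX a\<in>UNIV. L1norm M (\<lambda>w. muh (X w) $ a - mu (X w) $ a))
                 + (MAX a\<in>UNIV. L2norm M (\<lambda>w. muh (X w) $ a - mu (X w) $ a)
                      * (L2norm M (\<lambda>w. muh (X w) $ a - mu (X w) $ a)
                         + L2norm M (\<lambda>w. pih (X w) $ a - pi (X w) $ a)))))"
proof -
  define b where "b = max B (norm (proj_cb {} (0::real^'p)))"
  have b: "0 \<le> b" unfolding b_def by (simp add: le_max_iff_disj)
  show ?thesis
  proof (intro exI[of _ "real CARD('p) * (4 * b / \<epsilon> + 1 + 8 * b)"] allI impI ballI, elim conjE)
    fix M :: "'w measure" and N :: "'x measure" and Y A X C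
      and mu pi muh pih :: "'x \<Rightarrow> real^'p"
    assume obs: "obs_model M N Y A X mu pi"
      and measurable: "muh \<in> borel_measurable N" "pih \<in> borel_measurable N"
      and bounded: "\<forall>a x. \<bar>mu x $ a\<bar> \<le> B \<and> \<bar>muh x $ a\<bar> \<le> B"
      and pih: "\<forall>a. AE w in M. \<epsilon> \<le> pih (X w) $ a \<and> pih (X w) $ a \<le> 1 - \<epsilon>"
      and ipw_int: "\<forall>a. integrable M (\<lambda>w. (if A w = a then 1 else 0) / pi (X w) $ a * (Y w - mu (X w) $ a))"
      and C: "C \<in> codebooks k mu"
    have "finite C" using C by (simp add: codebooks_def)
    have mu_bounded: "\<bar>mu x $ a\<bar> \<le> b" "\<bar>muh x $ a\<bar> \<le> b" for x a
      using bounded by (auto simp: b_def le_max_iff_disj)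
    have proj_bounded: "\<bar>proj_cb C v $ a\<bar> \<le> b" for v a
      unfolding b_def using bounded by (intro proj_cb_codebook_bounded[OF C]) auto
    have "\<bar>\<integral>w. phiC C A Y X muh pih w - phiC C A Y X mu pi w \<partial>M\<bar>
      \<le> (\<Sum>a\<in>UNIV. 4 * b / \<epsilon> * (L2norm M (\<lambda>w. muh (X w) $ a - mu (X w) $ a)
                                   * L2norm M (\<lambda>w. pih (X w) $ a - pi (X w) $ a))
                 + 8 * b * L1norm M (\<lambda>w. muh (X w) $ a - mu (X w) $ a)
                 + (L2norm M (\<lambda>w. muh (X w) $ a - mu (X w) $ a))\<^sup>2)" (is "?lhs \<le> _")
      using pih ipw_int
      by (intro abs_integral_phiC_diff_le[OF obs measurable \<open>finite C\<close> mu_bounded proj_bounded assms]) auto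
    also have "\<dots> \<le> real CARD('p) * (4 * b / \<epsilon> + 1 + 8 * b)
       * ((MAX a\<in>UNIV. L1norm M (\<lambda>w. muh (X w) $ a - mu (X w) $ a))
          + (MAX a\<in>UNIV. L2norm M (\<lambda>w. muh (X w) $ a - mu (X w) $ a)
              * (L2norm M (\<lambda>w. muh (X w) $ a - mu (X w) $ a) + L2norm M (\<lambda>w. pih (X w) $ a - pi (X w) $ a))))"
      (is "_ \<le> ?rhs")
      using b assms
      by (intro sum_le_card_mult_max) (auto simp: L1norm_def L2norm_def intro!: integral_nonneg_AE)
    finally show "?lhs \<le> ?rhs" .
  qed
qed

end
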